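(* Let $p$ be a prime and $e$ an integer with $1\le e<p$. Then there are infinitely many distinct $c\in\mathbb{C}$ such that the correspondence on $\mathbb{A}^1$ defined by $y^e=x^p+c$ is postcritically constrained.
   Context: For polynomials $f,g\in\mathbb{C}[z]$ with $\deg f>\deg g\ge1$, the correspondence $g(y)=f(x)$ is $C=\{(a,b)\in\mathbb{C}^2:g(b)=f(a)\}$. A critical point is $a$ with $f'(a)=0$ or $g'(b)=0$ for some $b$ with $g(b)=f(a)$. A path is a sequence $(x_n)_{n\ge0}$ with $(x_n,x_{n+1})\in C$ for all $n$, starting at $x_0$; it is preperiodic if $(x_{n+j})_{j\ge0}=(x_{m+j})_{j\ge0}$ for some $n\ne m$. $C$ is postcritically constrained if every critical point starts at least one preperiodic path. *)

theory Defs
  imports Complex_Main "HOL-Computational_Algebra.Polynomial"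
begin

definition corr :: "complex poly \<Rightarrow> complex poly \<Rightarrow> (complex \<times> complex) set" where
  "corr f g = {(a, b). poly g b = poly f a}"

definition critical_point :: "complex poly \<Rightarrow> complex poly \<Rightarrow> complex \<Rightarrow> bool" where
  "critical_point f g a \<longleftrightarrow>
     poly (pderiv f) a = 0 \<or> (\<exists>b. poly g b = poly f a \<and> poly (pderiv g) b = 0)"

definition is_path :: "complex poly \<Rightarrow> complex poly \<Rightarrow> (nat \<Rightarrow> complex) \<Rightarrow> bool" where
  "is_path f g x \<longleftrightarrow> (\<forall>n. (x n, x (Suc n)) \<in> corr f g)"

definition preperiodic_seq :: "(nat \<Rightarrow> 'a) \<Rightarrow> bool" where
  "preperiodic_seq x \<longleftrightarrow> (\<exists>n m. n \<noteq> m \<and> (\<lambda>j. x (n + j)) = (\<lambda>j. x (m + j)))"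

definition postcritically_constrained :: "complex poly \<Rightarrow> complex poly \<Rightarrow> bool" where
  "postcritically_constrained f g \<longleftrightarrow>
     (\<forall>a. critical_point f g a \<longrightarrow> (\<exists>x. is_path f g x \<and> x 0 = a \<and> preperiodic_seq x))"

end

theory Submission
  imports Defs "HOL-Complex_Analysis.Complex_Analysis"
begin

text \<open>
  Call \<open>c\<close> returning if some path of the correspondence starting at \<open>0\<close> comes back to \<open>0\<close>.
  The only critical points are \<open>0\<close> and the roots of \<open>x\<^sup>p + c\<close>, and every path from either of them
  can be continued through \<open>0\<close>, so for returning \<open>c\<close> the correspondence is postcritically
  constrained. To find infinitely many returning parameters, consider the set \<open>M\<close> of \<open>c\<close> for which
  some path from \<open>0\<close> stays bounded: it contains a small disc and misses a large circle, so every
  ray from the origin crosses its boundary. Near a parameter \<open>c\<^sub>0 \<in> M\<close> without returning parameters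
  one can follow a bounded path from \<open>0\<close> holomorphically in \<open>c\<close>, and the functions
  \<open>-x\<^sub>n(c)\<^sup>p / c\<close> omit the values \<open>0\<close> and \<open>1\<close>; Schottky's theorem bounds them uniformly, so the
  whole disc lies in \<open>M\<close>. Hence the boundary of \<open>M\<close> lies in the closure of the returning
  parameters; if there were only finitely many, they would form a closed set meeting every ray
  from the origin, which is impossible.
\<close>

definition is_orbit :: "nat \<Rightarrow> nat \<Rightarrow> complex \<Rightarrow> (nat \<Rightarrow> complex) \<Rightarrow> bool" where
  "is_orbit p e c x \<longleftrightarrow> (\<forall>n. x (Suc n) ^ e = x n ^ p + c)"

definition reaches_from_zero :: "nat \<Rightarrow> nat \<Rightarrow> complex \<Rightarrow> nat \<Rightarrow> complex \<Rightarrow> bool" where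
  "reaches_from_zero p e c n w \<longleftrightarrow>
     (\<exists>z. z 0 = 0 \<and> z n = w \<and> (\<forall>k<n. z (Suc k) ^ e = z k ^ p + c))"

definition returns_to_zero :: "nat \<Rightarrow> nat \<Rightarrow> complex \<Rightarrow> bool" where
  "returns_to_zero p e c \<longleftrightarrow> (\<exists>N>0. reaches_from_zero p e c N 0)"

definition bounded_locus :: "nat \<Rightarrow> nat \<Rightarrow> complex set" where
  "bounded_locus p e = {c. \<exists>x. is_orbit p e c x \<and> x 0 = 0 \<and> bounded (range x)}"

lemma is_path_iff_is_orbit:
  "is_path (monom 1 p + [:c:]) (monom 1 e) x \<longleftrightarrow> is_orbit p e c x"
  by (simp add: is_path_def corr_def is_orbit_def poly_monom)

subsection \<open>Returning parameters\<close>

lemma reaches_from_zero_0 [simp]: "reaches_from_zero p e c 0 w \<longleftrightarrow> w = 0"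
  by (auto simp: reaches_from_zero_def)

lemma reaches_from_zero_Suc:
  assumes "reaches_from_zero p e c n w" "w' ^ e = w ^ p + c"
  shows "reaches_from_zero p e c (Suc n) w'"
proof -
  obtain z where z: "z 0 = 0" "z n = w" "\<forall>k<n. z (Suc k) ^ e = z k ^ p + c"
    using assms(1) unfolding reaches_from_zero_def by blast
  have "\<forall>k<Suc n. (z(Suc n := w')) (Suc k) ^ e = (z(Suc n := w')) k ^ p + c"
    using z assms(2) by (auto simp: less_Suc_eq)
  then show ?thesis unfolding reaches_from_zero_def using z(1) by (intro exI[of _ "z(Suc n := w')"]) simp
qed

lemma orbit_reaches_from_zero:
  assumes "is_orbit p e c x" "x 0 = 0"
  shows "reaches_from_zero p e c n (x n)"
  using assms unfolding reaches_from_zero_def is_orbit_def by blast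

lemma returns_to_zero_zero:
  assumes "0 < p" "0 < e"
  shows "returns_to_zero p e 0"
proof -
  have "reaches_from_zero p e 0 1 0"
    using reaches_from_zero_Suc[of p e 0 0 0 0] by (simp add: assms zero_power)
  then show ?thesis unfolding returns_to_zero_def by blast
qed

lemma not_returns_to_zero_orbit_nonzero:
  assumes "\<not> returns_to_zero p e c" "is_orbit p e c x" "x 0 = 0" "0 < n"
  shows "x n \<noteq> 0"
proof
  assume "x n = 0"
  then have "reaches_from_zero p e c n 0" using orbit_reaches_from_zero[OF assms(2,3), of n] by simp
  with assms(1,4) show False unfolding returns_to_zero_def by blast
qed

lemma reaches_from_zero_power_add_nonzero:
  assumes "0 < e" "\<not> returns_to_zero p e c" "reaches_from_zero p e c n w"
  shows "w ^ p + c \<noteq> 0"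
proof
  assume "w ^ p + c = 0"
  then have "reaches_from_zero p e c (Suc n) 0"
    using reaches_from_zero_Suc[OF assms(3), of 0] assms(1) by simp
  with assms(2) show False unfolding returns_to_zero_def by blast
qed

lemma periodic_orbit_of_cycle:
  assumes "0 < N" "z 0 = 0" "z N = 0" "\<forall>k<N. z (Suc k) ^ e = z k ^ p + c"
  shows "is_orbit p e c (\<lambda>j. z (j mod N))"
  unfolding is_orbit_def
proof
  fix j
  have "z (Suc j mod N) = z (Suc (j mod N))"
    using assms(2,3) by (cases "Suc (j mod N) = N") (simp_all add: mod_Suc)
  then show "z (Suc j mod N) ^ e = z (j mod N) ^ p + c"
    using assms(1,4) by simp
qed

lemma preperiodic_seq_periodic:
  assumes "0 < N" "\<And>j. x (N + j) = x j"
  shows "preperiodic_seq x"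
  unfolding preperiodic_seq_def using assms by (intro exI[of _ 0] exI[of _ N]) auto

lemma preperiodic_seq_case_nat:
  assumes "preperiodic_seq x"
  shows "preperiodic_seq (case_nat a x)"
proof -
  obtain n m where "n \<noteq> m" "(\<lambda>j. x (n + j)) = (\<lambda>j. x (m + j))"
    using assms unfolding preperiodic_seq_def by blast
  then show ?thesis
    unfolding preperiodic_seq_def by (intro exI[of _ "Suc n"] exI[of _ "Suc m"]) simp
qed

lemma returns_to_zero_preperiodic_orbit:
  assumes "returns_to_zero p e c"
  obtains x where "is_orbit p e c x" "x 0 = 0" "preperiodic_seq x"
proof -
  obtain N z where z: "0 < N" "z 0 = 0" "z N = 0" "\<forall>k<N. z (Suc k) ^ e = z k ^ p + c"
    using assms unfolding returns_to_zero_def reaches_from_zero_def by blast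
  have "preperiodic_seq (\<lambda>j. z (j mod N))"
    by (rule preperiodic_seq_periodic[OF z(1)]) simp
  then show ?thesis using that periodic_orbit_of_cycle[OF z] z(2) by simp
qed

lemma critical_point_cases:
  assumes "0 < p" "0 < e" "critical_point (monom 1 p + [:c:]) (monom 1 e) a"
  shows "a = 0 \<or> a ^ p + c = 0"
proof (cases "poly (pderiv (monom 1 p + [:c:])) a = 0")
  case True
  then have "of_nat p * a ^ (p - 1) = 0"
    by (simp add: pderiv_add pderiv_monom pderiv_pCons poly_monom)
  then show ?thesis using assms(1) by (cases "p = 1") auto
next
  case False
  then obtain b where b: "b ^ e = a ^ p + c" "of_nat e * b ^ (e - 1) = 0"
    using assms(3) unfolding critical_point_def by (auto simp: pderiv_monom poly_monom)
  then have "b = 0" using assms(2) by (cases "e = 1") auto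
  then show ?thesis using b(1) assms(2) by (simp add: power_0_left)
qed

lemma returns_to_zero_imp_postcritically_constrained:
  assumes "0 < p" "0 < e" "returns_to_zero p e c"
  shows "postcritically_constrained (monom 1 p + [:c:]) (monom 1 e)"
  unfolding postcritically_constrained_def is_path_iff_is_orbit
proof (intro allI impI)
  fix a assume "critical_point (monom 1 p + [:c:]) (monom 1 e) a"
  then consider "a = 0" | "a ^ p + c = 0" using critical_point_cases assms(1,2) by blast
  moreover obtain x where x: "is_orbit p e c x" "x 0 = 0" "preperiodic_seq x"
    using returns_to_zero_preperiodic_orbit[OF assms(3)] .
  ultimately show "\<exists>x. is_orbit p e c x \<and> x 0 = a \<and> preperiodic_seq x"
  proof cases
    case 2
    have "is_orbit p e c (case_nat a x)"
      using x(1,2) 2 assms(2) unfolding is_orbit_def by (auto split: nat.split)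
    then show ?thesis using preperiodic_seq_case_nat[OF x(3)] by auto
  qed (use x in auto)
qed

subsection \<open>The bounded locus\<close>

lemma orbit_bounded_if_small:
  assumes "0 < e" "e < p" "norm c \<le> (1/2) ^ p" "is_orbit p e c x" "x 0 = 0"
  shows "norm (x n) \<le> 1/2"
proof (induction n)
  case (Suc n)
  have "norm (x (Suc n)) ^ e = norm (x n ^ p + c)"
    using assms(4) unfolding is_orbit_def by (metis norm_power)
  also have "\<dots> \<le> norm (x n) ^ p + norm c"
    using norm_triangle_ineq by (metis norm_power)
  also have "\<dots> \<le> (1/2) ^ p + (1/2) ^ p"
    using Suc.IH assms(3) by (intro add_mono power_mono) auto
  also have "\<dots> = (1/2) ^ (p - 1)"
    using assms(2) by (cases p) auto
  also have "\<dots> \<le> (1/2) ^ e"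
    using assms(2) by (intro power_decreasing) auto
  finally show ?case using assms(1) by (simp add: power_mono_iff)
qed (use assms(5) in simp)

lemma orbit_exists:
  assumes "0 < e"
  shows "\<exists>x. is_orbit p e c x \<and> x 0 = z"
proof -
  define root where "root w = (if w = 0 then 0 else exp (Ln w / of_nat e))" for w :: complex
  have root: "root w ^ e = w" for w
    using assms by (simp add: root_def flip: exp_of_nat_mult)
  define x where "x = rec_nat z (\<lambda>_ w. root (w ^ p + c))"
  have "is_orbit p e c x" unfolding is_orbit_def x_def by (simp add: root)
  then show ?thesis by (intro exI[of _ x]) (simp add: x_def)
qed

lemma small_mem_bounded_locus:
  assumes "0 < e" "e < p" "norm c \<le> (1/2) ^ p"
  shows "c \<in> bounded_locus p e"
proof -
  obtain x where "is_orbit p e c x" "x 0 = 0"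
    using orbit_exists[OF assms(1)] by blast
  then show ?thesis
    unfolding bounded_locus_def bounded_iff
    using orbit_bounded_if_small[OF assms] by blast
qed

lemma escape_step:
  fixes t C :: real
  assumes "0 < e" "e < p" "2 ^ (e+1) \<le> t" "C \<le> t ^ e"
  shows "(2 * t) ^ e \<le> t ^ p - C"
proof -
  have t1: "1 \<le> t" using assms(3) one_le_power[of "2::real" "e+1"] by linarith
  have "2 * 2 ^ e * t ^ e \<le> t * t ^ e"
    using assms(3) by (intro mult_right_mono) (use t1 in simp_all)
  also have "\<dots> = t ^ (e + 1)" by simp
  also have "\<dots> \<le> t ^ p"
    using assms(2) t1 by (intro power_increasing) auto
  finally have "2 * 2 ^ e * t ^ e \<le> t ^ p" .
  moreover have "t ^ e \<le> 2 ^ e * t ^ e" using t1 by simp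
  ultimately show ?thesis using assms(4) by (simp add: power_mult_distrib)
qed

lemma orbit_escapes:
  assumes "0 < e" "e < p" "is_orbit p e c x"
    and "2 ^ (e+1) \<le> norm (x 1)" "norm c \<le> norm (x 1) ^ e"
  shows "2 ^ n * norm (x 1) \<le> norm (x (Suc n))"
proof (induction n)
  case (Suc n)
  define t where "t = norm (x (Suc n))"
  have "1 * norm (x 1) \<le> 2 ^ n * norm (x 1)" by (intro mult_right_mono) simp_all
  then have x1_le: "norm (x 1) \<le> t" using Suc.IH unfolding t_def by linarith
  have "norm c \<le> t ^ e"
    using assms(5) power_mono[OF x1_le, of e] by simp
  then have "(2 * t) ^ e \<le> t ^ p - norm c"
    using assms(1,2,4) x1_le by (intro escape_step) auto
  also have "\<dots> \<le> norm (x (Suc n) ^ p + c)"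
    using norm_diff_ineq[of "x (Suc n) ^ p" c] by (simp add: t_def norm_power)
  also have "\<dots> = norm (x (Suc (Suc n))) ^ e"
    using assms(3) unfolding is_orbit_def by (metis norm_power)
  finally have "(2 * t) ^ e \<le> norm (x (Suc (Suc n))) ^ e" .
  then have "2 * t \<le> norm (x (Suc (Suc n)))"
    using power_mono_iff[of "2 * t" "norm (x (Suc (Suc n)))" e] assms(1) unfolding t_def by simp
  then show ?case using Suc.IH unfolding t_def by simp
qed simp

lemma large_not_mem_bounded_locus:
  assumes "0 < e" "e < p" "norm c = (2 ^ (e+1)) ^ e"
  shows "c \<notin> bounded_locus p e"
proof
  assume "c \<in> bounded_locus p e"
  then obtain x K where x: "is_orbit p e c x" "x 0 = 0" and K: "\<And>n. norm (x n) \<le> K"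
    unfolding bounded_locus_def bounded_iff by blast
  have "x 1 ^ e = x 0 ^ p + c" using x(1) unfolding is_orbit_def by (metis One_nat_def)
  then have "x 1 ^ e = c" using x(2) assms(2) by (simp add: zero_power)
  then have "norm (x 1) ^ e = norm c" by (metis norm_power)
  then have "norm (x 1) ^ e = (2 ^ (e+1)) ^ e" using assms(3) by (rule trans)
  then have x1: "norm (x 1) = 2 ^ (e+1)"
    by (rule power_eq_imp_eq_base) (simp_all add: assms(1))
  obtain n :: nat where "K < n" using reals_Archimedean2 by blast
  have "real n < 2 ^ n" by (rule of_nat_less_two_power)
  also have "\<dots> \<le> 2 ^ n * norm (x 1)" using x1 one_le_power[of "2::real" "e+1"] by simp
  also have "\<dots> \<le> norm (x (Suc n))"
    using orbit_escapes[OF assms(1,2) x(1)] x1 assms(3) by simp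
  also have "\<dots> \<le> K" by (rule K)
  finally show False using \<open>K < n\<close> by simp
qed

subsection \<open>Holomorphic families of orbits\<close>

lemma holomorphic_nth_root_exists:
  assumes "0 < e" "convex S" "open S" "F holomorphic_on S" "\<And>c. c \<in> S \<Longrightarrow> F c \<noteq> 0"
    and "c0 \<in> S" "w ^ e = F c0"
  obtains g where "g holomorphic_on S" "\<And>c. c \<in> S \<Longrightarrow> g c ^ e = F c" "g c0 = w"
proof -
  obtain L where L: "L holomorphic_on S" "\<And>c. c \<in> S \<Longrightarrow> exp (L c) = F c"
    using holomorphic_logarithm_exists[OF assms(2-6)] by blast
  define g0 where "g0 c = exp (L c / of_nat e)" for c
  have g0: "g0 c ^ e = F c" if "c \<in> S" for c
    using L(2)[OF that] assms(1) unfolding g0_def by (simp flip: exp_of_nat_mult)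
  define g where "g c = w / g0 c0 * g0 c" for c
  show ?thesis
  proof (rule that)
    show "g holomorphic_on S" unfolding g_def g0_def using L(1) by (intro holomorphic_intros) auto
    show "g c ^ e = F c" if "c \<in> S" for c
      using g0[OF that] g0[OF assms(6)] assms(5-7) unfolding g_def
      by (simp add: power_mult_distrib power_divide)
    show "g c0 = w" unfolding g_def g0_def by simp
  qed
qed

text \<open>
  Without returning parameters in \<open>S\<close> the values \<open>x\<^sub>n(c)\<^sup>p + c\<close> never vanish, so their \<open>e\<close>-th
  roots can be chosen holomorphically.
\<close>
lemma holomorphic_orbit_family:
  assumes "0 < e" "convex S" "open S" "c0 \<in> S"
    and no_return: "\<And>c. c \<in> S \<Longrightarrow> \<not> returns_to_zero p e c"
    and a: "is_orbit p e c0 a" "a 0 = 0"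
  obtains X where "\<And>n. X n holomorphic_on S" "\<And>n. X n c0 = a n"
    "\<And>c. c \<in> S \<Longrightarrow> is_orbit p e c (\<lambda>n. X n c)" "\<And>c. c \<in> S \<Longrightarrow> X 0 c = 0"
proof -
  define P where "P n g \<longleftrightarrow> g holomorphic_on S \<and> g c0 = a n \<and>
      (\<forall>c\<in>S. reaches_from_zero p e c n (g c))" for n g
  have "\<exists>g'. P (Suc n) g' \<and> (\<forall>c\<in>S. g' c ^ e = g c ^ p + c)" if Pg: "P n g" for n g
  proof -
    have "(\<lambda>c. g c ^ p + c) holomorphic_on S"
      using Pg unfolding P_def by (auto intro!: holomorphic_intros)
    moreover have "g c ^ p + c \<noteq> 0" if "c \<in> S" for c
      using reaches_from_zero_power_add_nonzero[OF assms(1) no_return] Pg that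
      unfolding P_def by blast
    moreover have "a (Suc n) ^ e = g c0 ^ p + c0"
      using a(1) Pg unfolding P_def is_orbit_def by simp
    ultimately obtain g' where g': "g' holomorphic_on S" "\<And>c. c \<in> S \<Longrightarrow> g' c ^ e = g c ^ p + c"
      "g' c0 = a (Suc n)"
      using holomorphic_nth_root_exists[OF assms(1-3) _ _ assms(4)] by blast
    then show ?thesis
      using Pg reaches_from_zero_Suc unfolding P_def by (intro exI[of _ g']) auto
  qed
  moreover have "P 0 (\<lambda>_. 0)" unfolding P_def using a(2) by simp
  ultimately obtain X where P: "\<And>n. P n (X n)"
    and X_Suc: "\<And>n c. c \<in> S \<Longrightarrow> X (Suc n) c ^ e = X n c ^ p + c"
    using dependent_nat_choice[of P "\<lambda>n g g'. \<forall>c\<in>S. g' c ^ e = g c ^ p + c"] by blast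
  show ?thesis
  proof (rule that)
    show "X n holomorphic_on S" "X n c0 = a n" for n using P unfolding P_def by auto
    show "is_orbit p e c (\<lambda>n. X n c)" if "c \<in> S" for c
      using X_Suc that unfolding is_orbit_def by blast
    show "X 0 c = 0" if "c \<in> S" for c using P[of 0] that unfolding P_def by simp
  qed
qed

lemma Schottky_uniform_bound:
  fixes c0 c1 :: complex
  assumes "c1 \<in> ball c0 R"
  obtains B where "\<And>f. f holomorphic_on ball c0 R \<Longrightarrow>
      (\<And>z. z \<in> ball c0 R \<Longrightarrow> f z \<noteq> 0 \<and> f z \<noteq> 1) \<Longrightarrow> norm (f c0) \<le> r \<Longrightarrow> norm (f c1) \<le> B"
proof -
  obtain \<rho> where \<rho>: "dist c0 c1 < \<rho>" "\<rho> < R"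
    using dense[of "dist c0 c1" R] assms by auto
  have \<rho>_pos: "0 < \<rho>" using \<rho>(1) zero_le_dist[of c0 c1] by linarith
  define \<phi> where "\<phi> z = c0 + of_real \<rho> * z" for z
  define z1 where "z1 = (c1 - c0) / of_real \<rho>"
  have "norm z1 < 1"
    using \<rho>(1) \<rho>_pos by (simp add: z1_def norm_divide dist_norm norm_minus_commute)
  then obtain t where "norm z1 < t" "t < 1" using dense by blast
  then have t: "0 < t" "t < 1" "norm z1 \<le> t" using norm_ge_zero[of z1] by linarith+
  have \<phi>z1: "\<phi> z1 = c1" using \<rho>_pos by (simp add: \<phi>_def z1_def)
  have \<phi>_ball: "\<phi> z \<in> ball c0 R" if "z \<in> cball 0 1" for z
  proof -
    have "dist c0 (\<phi> z) = \<rho> * norm z" using \<rho>_pos by (simp add: \<phi>_def dist_norm norm_mult)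
    also have "\<dots> \<le> \<rho>" using that \<rho>_pos by (simp add: mult_left_le)
    also have "\<dots> < R" by (rule \<rho>(2))
    finally show ?thesis by simp
  qed
  show ?thesis
  proof (rule that)
    fix f assume hol: "f holomorphic_on ball c0 R"
      and omit: "\<And>z. z \<in> ball c0 R \<Longrightarrow> f z \<noteq> 0 \<and> f z \<noteq> 1" and f0: "norm (f c0) \<le> r"
    have "norm ((f \<circ> \<phi>) z1) \<le> exp (pi * exp (pi * (2 + 2 * r + 12 * t / (1 - t))))"
    proof (rule Schottky[OF _ _ _ t])
      show "(f \<circ> \<phi>) holomorphic_on cball 0 1"
        using hol \<phi>_ball unfolding \<phi>_def
        by (intro holomorphic_on_compose_gen[where t = "ball c0 R"] holomorphic_intros) auto
    qed (use f0 omit \<phi>_ball in \<open>auto simp: \<phi>_def\<close>)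
    then show "norm (f c1) \<le> exp (pi * exp (pi * (2 + 2 * r + 12 * t / (1 - t))))"
      using \<phi>z1 by simp
  qed
qed

lemma not_returns_to_zero_orbit_quotient:
  assumes "0 < p" "0 < e" "\<not> returns_to_zero p e c" "is_orbit p e c x" "x 0 = 0"
  shows "- (x (Suc n) ^ p) / c \<noteq> 0" "- (x (Suc n) ^ p) / c \<noteq> 1"
proof -
  have "c \<noteq> 0" using assms(3) returns_to_zero_zero[OF assms(1,2)] by auto
  have "x (Suc (Suc n)) ^ e = x (Suc n) ^ p + c" using assms(4) unfolding is_orbit_def by blast
  then have "x (Suc n) ^ p + c \<noteq> 0"
    using not_returns_to_zero_orbit_nonzero[OF assms(3-5), of "Suc (Suc n)"] assms(2) by auto
  with \<open>c \<noteq> 0\<close> show "- (x (Suc n) ^ p) / c \<noteq> 1"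
    by (auto simp: field_simps neg_eq_iff_add_eq_0)
  show "- (x (Suc n) ^ p) / c \<noteq> 0"
    using not_returns_to_zero_orbit_nonzero[OF assms(3-5), of "Suc n"] \<open>c \<noteq> 0\<close> by simp
qed

lemma power_le_imp_le_max_one:
  fixes x M :: real
  assumes "0 < p" "0 \<le> x" "x ^ p \<le> M"
  shows "x \<le> max 1 M"
proof (cases "x \<le> 1")
  case False
  then have "x \<le> x ^ p" using assms(1) by (intro self_le_power) auto
  then show ?thesis using assms(3) by simp
qed simp

text \<open>The boundary of the bounded locus lies in the closure of the returning parameters.\<close>
lemma ball_subset_bounded_locus:
  assumes "0 < e" "e < p" "c0 \<in> bounded_locus p e"
    and no_return: "\<And>c. c \<in> ball c0 R \<Longrightarrow> \<not> returns_to_zero p e c"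
  shows "ball c0 R \<subseteq> bounded_locus p e"
proof
  fix c1 assume c1: "c1 \<in> ball c0 R"
  have nonzero: "c \<noteq> 0" if "c \<in> ball c0 R" for c
    using no_return[OF that] returns_to_zero_zero assms(1,2) by auto
  obtain a K where a: "is_orbit p e c0 a" "a 0 = 0" and K: "\<And>n. norm (a n) \<le> K"
    using assms(3) unfolding bounded_locus_def bounded_iff by blast
  have c0: "c0 \<in> ball c0 R" using c1 by (simp add: order_le_less_trans[OF zero_le_dist])
  obtain X where X: "\<And>n. X n holomorphic_on ball c0 R" "\<And>n. X n c0 = a n"
    "\<And>c. c \<in> ball c0 R \<Longrightarrow> is_orbit p e c (\<lambda>n. X n c)" "\<And>c. c \<in> ball c0 R \<Longrightarrow> X 0 c = 0"
    using holomorphic_orbit_family[OF assms(1) convex_ball open_ball c0 no_return a] by blast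
  obtain B where B: "\<And>f. f holomorphic_on ball c0 R \<Longrightarrow>
      (\<And>z. z \<in> ball c0 R \<Longrightarrow> f z \<noteq> 0 \<and> f z \<noteq> 1) \<Longrightarrow> norm (f c0) \<le> K ^ p / norm c0 \<Longrightarrow>
      norm (f c1) \<le> B"
    using Schottky_uniform_bound[OF c1] by blast
  have "norm (X (Suc n) c1 ^ p / c1) \<le> B" for n
  proof -
    have "(\<lambda>c. - (X (Suc n) c ^ p) / c) holomorphic_on ball c0 R"
      using X(1) nonzero by (intro holomorphic_intros) auto
    moreover have "- (X (Suc n) c ^ p) / c \<noteq> 0 \<and> - (X (Suc n) c ^ p) / c \<noteq> 1"
      if "c \<in> ball c0 R" for c
      using not_returns_to_zero_orbit_quotient[of p e c "\<lambda>n. X n c" n]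
        no_return[OF that] X(3,4)[OF that] assms(1,2) by simp
    moreover have "norm (- (X (Suc n) c0 ^ p) / c0) \<le> K ^ p / norm c0"
      using X(2) K by (simp add: norm_divide norm_power divide_right_mono power_mono)
    ultimately show ?thesis using B[of "\<lambda>c. - (X (Suc n) c ^ p) / c"] by (simp add: norm_divide)
  qed
  then have "norm (X (Suc n) c1) ^ p \<le> B * norm c1" for n
    using nonzero[OF c1] by (simp add: norm_divide norm_power divide_le_eq)
  then have "norm (X n c1) \<le> max 1 (B * norm c1)" for n
    using X(4)[OF c1] power_le_imp_le_max_one[of p] assms(2) by (cases n) auto
  then show "c1 \<in> bounded_locus p e"
    unfolding bounded_locus_def bounded_iff using X(3,4) c1 by blast
qed

subsection \<open>Returning parameters on every ray\<close>

lemma dist_of_real_mult_unit: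
  fixes u :: complex
  assumes "norm u = 1"
  shows "dist (of_real x * u) (of_real y * u) = \<bar>x - y\<bar>"
proof -
  have "dist (of_real x * u) (of_real y * u) = norm (of_real (x - y) * u)"
    unfolding dist_norm by (simp add: algebra_simps)
  then show ?thesis using assms by (simp only: norm_mult norm_of_real) simp
qed

lemma ray_meets_closure_returns_to_zero:
  assumes "0 < e" "e < p" "norm u = 1"
  shows "\<exists>s \<ge> (1/2) ^ p. of_real s * u \<in> closure {c. returns_to_zero p e c}"
proof -
  define r0 :: real where "r0 = (1/2) ^ p"
  define R0 :: real where "R0 = (2 ^ (e+1)) ^ e"
  have r0: "0 < r0" "r0 \<le> 1" unfolding r0_def by (simp_all add: power_le_one)
  have R0: "1 \<le> R0" unfolding R0_def by (intro one_le_power) simp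
  define T where "T = {t. r0 \<le> t \<and> t \<le> R0 \<and> of_real t * u \<in> bounded_locus p e}"
  have "norm (of_real r0 * u) \<le> (1/2) ^ p" using r0 assms(3) by (simp add: r0_def norm_mult norm_power)
  then have r0T: "r0 \<in> T"
    unfolding T_def using r0 R0 small_mem_bounded_locus[OF assms(1,2)] by simp
  have bdd: "bdd_above T" unfolding T_def by (intro bdd_aboveI[of _ R0]) auto
  define s where "s = Sup T"
  have s: "r0 \<le> s" "s \<le> R0"
    unfolding s_def using r0T bdd by (auto intro: cSup_upper cSup_least simp: T_def)
  have "norm (of_real R0 * u) = (2 ^ (e+1)) ^ e" using assms(3) R0 by (simp add: R0_def norm_mult norm_power)
  then have R0_not_mem: "of_real R0 * u \<notin> bounded_locus p e"
    by (rule large_not_mem_bounded_locus[OF assms(1,2)])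
  have "of_real s * u \<in> closure {c. returns_to_zero p e c}"
    unfolding closure_approachable
  proof (intro allI impI)
    fix \<epsilon> :: real assume "0 < \<epsilon>"
    obtain t1 where t1: "t1 \<in> T" "s - \<epsilon>/4 < t1"
      using less_cSupD[of T "s - \<epsilon>/4"] r0T \<open>0 < \<epsilon>\<close> unfolding s_def by auto
    have "t1 \<le> s" unfolding s_def using t1(1) bdd by (rule cSup_upper)
    define t2 where "t2 = min (s + \<epsilon>/4) R0"
    have "s \<le> t2" using s \<open>0 < \<epsilon>\<close> by (simp add: t2_def)
    have t2_not_mem: "of_real t2 * u \<notin> bounded_locus p e"
    proof
      assume mem: "of_real t2 * u \<in> bounded_locus p e"
      then have "t2 \<le> s" unfolding s_def using s \<open>s \<le> t2\<close>
        by (intro cSup_upper[OF _ bdd]) (simp add: T_def t2_def)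
      then have "t2 = R0" using \<open>0 < \<epsilon>\<close> by (auto simp: t2_def min_def split: if_splits)
      with mem R0_not_mem show False by simp
    qed
    have "t2 \<le> s + \<epsilon>/4" by (simp add: t2_def)
    then have "of_real t2 * u \<in> ball (of_real t1 * u) (\<epsilon>/2)"
      using \<open>t1 \<le> s\<close> \<open>s \<le> t2\<close> t1(2) dist_of_real_mult_unit[OF assms(3)] by simp
    then obtain c where c: "c \<in> ball (of_real t1 * u) (\<epsilon>/2)" "returns_to_zero p e c"
      using ball_subset_bounded_locus[OF assms(1,2)] t1(1) t2_not_mem unfolding T_def by blast
    have "dist (of_real t1 * u) (of_real s * u) < \<epsilon>/4"
      using \<open>t1 \<le> s\<close> t1(2) dist_of_real_mult_unit[OF assms(3)] by simp
    then have "dist c (of_real s * u) < \<epsilon>"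
      using \<open>0 < \<epsilon>\<close> c(1) dist_triangle[of c "of_real s * u" "of_real t1 * u"] by (simp add: dist_commute)
    then show "\<exists>c\<in>{c. returns_to_zero p e c}. dist c (of_real s * u) < \<epsilon>" using c(2) by blast
  qed
  then show ?thesis using s(1) unfolding r0_def by blast
qed

lemma infinite_unit_circle: "infinite (sphere (0::complex) 1)"
proof
  have "{-1..1} \<subseteq> Re ` sphere (0::complex) 1"
  proof
    fix x :: real assume "x \<in> {-1..1}"
    then have "x\<^sup>2 \<le> 1" by (simp add: abs_square_le_1 abs_le_iff)
    then have "Complex x (sqrt (1 - x\<^sup>2)) \<in> sphere 0 1" by (simp add: cmod_def)
    then show "x \<in> Re ` sphere 0 1" by force
  qed
  moreover assume "finite (sphere (0::complex) 1)"
  ultimately have "finite {-1..1::real}" by (metis finite_subset finite_imageI)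
  then show False using infinite_Icc[of "-1::real" 1] by simp
qed

lemma infinite_returns_to_zero:
  assumes "0 < e" "e < p"
  shows "infinite {c. returns_to_zero p e c}"
proof
  assume fin: "finite {c. returns_to_zero p e c}"
  have "sphere 0 1 \<subseteq> sgn ` {c. returns_to_zero p e c}"
  proof
    fix u :: complex assume "u \<in> sphere 0 1"
    then obtain s where s: "(1/2) ^ p \<le> s" "returns_to_zero p e (of_real s * u)"
      using ray_meets_closure_returns_to_zero[OF assms, of u] fin by (auto simp: closure_closed finite_imp_closed)
    have "0 < s" using s(1) zero_less_power[of "1/2::real" p] by linarith
    then have "sgn (of_real s * u) = u"
      unfolding sgn_mult sgn_of_real using \<open>u \<in> sphere 0 1\<close> by (simp add: sgn_div_norm)
    with s(2) show "u \<in> sgn ` {c. returns_to_zero p e c}" by force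
  qed
  with fin infinite_unit_circle show False using finite_surj by blast
qed

theorem theorem1p4:
  fixes p e :: nat
  assumes "prime p" and "1 \<le> e" and "e < p"
  shows "infinite {c :: complex.
           postcritically_constrained (monom 1 p + [:c:]) (monom 1 e)}"
proof -
  have e: "0 < e" "0 < p" using assms(2,3) by auto
  have "{c. returns_to_zero p e c} \<subseteq>
      {c. postcritically_constrained (monom 1 p + [:c:]) (monom 1 e)}"
    using returns_to_zero_imp_postcritically_constrained[OF e(2,1)] by blast
  then show ?thesis using infinite_returns_to_zero[OF e(1) assms(3)] infinite_super by blast
qed

end
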